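(* For every choice of parameters $\lambda>0$, $\eta\in(0,1)$, $g_l^*>0$, integers $t\ge1$ and $\mathit{Depth}_{\max}\ge 1$, and privacy budget $\varepsilon_t>0$, the algorithm TrainSingleTree described below is $\varepsilon_t$-differentially private, i.e. for all neighboring datasets $D,D'$ and every measurable set $O$ of outputs, $\Pr[\mathcal A(D)\in O]\le e^{\varepsilon_t}\Pr[\mathcal A(D')\in O]$.
   Context: A dataset is a finite collection of records $i$, each consisting of a feature vector $\mathbf x_i\in\mathbb R^d$, a label $y_i\in[-1,1]$ and a gradient $g_i\in\mathbb R$ determined by the record (e.g. $g_i=\partial l(y_i,y)/\partial y$ evaluated at the prediction of a fixed, data-independent current model). Two datasets are neighboring if one is obtained from the other by adding or removing one record. Splits of a node are chosen from a fixed finite set of candidate splits (feature index, threshold), each partitioning the node's records into a left set $I_L$ and right set $I_R$. Let $G(I_L,I_R)=\frac{(\sum_{i\in I_L}g_i)^2}{|I_L|+\lambda}+\frac{(\sum_{i\in I_R}g_i)^2}{|I_R|+\lambda}$, $V(I)=-\frac{\sum_{i\in I}g_i}{|I|+\lambda}$, $\Delta G=3{g_l^*}^2$, $\Delta V=\min\left(\frac{g_l^*}{1+\lambda},2g_l^*(1-\eta)^{t-1}\right)$. Algorithm TrainSingleTree on dataset $I$: (1) set $\varepsilon_{leaf}=\varepsilon_t/2$ and $\varepsilon_{nleaf}=\varepsilon_t/(2\mathit{Depth}_{\max})$; (2) discard all records with $|g_i|>g_l^*$; (3) starting from a root node containing all remaining records, for $depth=1,\dots,\mathit{Depth}_{\max}$,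 for each node at the current depth: for each candidate split $j$ compute $G_j=G(I_L,I_R)$ on the node's records, choose split $s$ with probability $P_s/\sum_j P_j$ where $P_j=\exp\left(\frac{\varepsilon_{nleaf}G_j}{2\Delta G}\right)$, and split the node accordingly; (4) for each resulting leaf with record set $I_\ell$, compute $V=V(I_\ell)$, clip it to $V'=V\cdot\min(1,g_l^*(1-\eta)^{t-1}/|V|)$ (with $V'=0$ if $V=0$), and release $V'+\mathrm{Lap}(0,\Delta V/\varepsilon_{leaf})$ using independent Laplace noise of mean $0$ and scale $\Delta V/\varepsilon_{leaf}$. The output is the tree structure (all chosen splits) together with the noisy leaf values. *)

theory Defs
  imports "HOL-Probability.Probability"
begin

type_synonym 'd rcd = "(real^'d) \<times> real \<times> real"

definition feat :: "('d::finite) rcd \<Rightarrow> real^'d" where "feat r = fst r"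
definition lab  :: "('d::finite) rcd \<Rightarrow> real" where "lab r = fst (snd r)"
definition grad :: "('d::finite) rcd \<Rightarrow> real" where "grad r = snd (snd r)"

type_synonym 'd dataset = "('d::finite) rcd multiset"

definition neighboring :: "('d::finite) dataset \<Rightarrow> ('d::finite) dataset \<Rightarrow> bool" where
  "neighboring D D' \<longleftrightarrow> (\<exists>r. D' = add_mset r D \<or> D = add_mset r D')"

type_synonym 'd split = "'d \<times> real"

definition goes_left :: "('d::finite) split \<Rightarrow> ('d::finite) rcd \<Rightarrow> bool" where
  "goes_left c r \<longleftrightarrow> feat r $ fst c \<le> snd c"

definition left_part :: "('d::finite) split \<Rightarrow> ('d::finite) dataset \<Rightarrow> ('d::finite) dataset" where
  "left_part c I = filter_mset (goes_left c) I"
definition right_part :: "('d::finite) split \<Rightarrow> ('d::finite) dataset \<Rightarrow> ('d::finite) dataset" where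
  "right_part c I = filter_mset (\<lambda>r. \<not> goes_left c r) I"

definition gsum :: "('d::finite) dataset \<Rightarrow> real" where
  "gsum I = (\<Sum>r\<in>#I. grad r)"

definition Gain :: "real \<Rightarrow> ('d::finite) dataset \<Rightarrow> ('d::finite) dataset \<Rightarrow> real" where
  "Gain lam IL IR = (gsum IL)^2 / (real (size IL) + lam) + (gsum IR)^2 / (real (size IR) + lam)"

definition Vleaf :: "real \<Rightarrow> ('d::finite) dataset \<Rightarrow> real" where
  "Vleaf lam I = - gsum I / (real (size I) + lam)"

definition DeltaG :: "real \<Rightarrow> real" where
  "DeltaG gl = 3 * gl^2"

definition DeltaV :: "real \<Rightarrow> real \<Rightarrow> real \<Rightarrow> nat \<Rightarrow> real" where
  "DeltaV lam eta gl t = min (gl / (1 + lam)) (2 * gl * (1 - eta)^(t - 1))"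

definition clipV :: "real \<Rightarrow> real \<Rightarrow> nat \<Rightarrow> real \<Rightarrow> real" where
  "clipV eta gl t V = (if V = 0 then 0 else V * min 1 (gl * (1 - eta)^(t - 1) / \<bar>V\<bar>))"

definition laplace :: "real \<Rightarrow> real \<Rightarrow> real measure" where
  "laplace mu b = density lborel (\<lambda>x. ennreal (exp (- \<bar>x - mu\<bar> / b) / (2 * b)))"

definition split_weight :: "real \<Rightarrow> real \<Rightarrow> real \<Rightarrow> ('d::finite) dataset \<Rightarrow> ('d::finite) split \<Rightarrow> real" where
  "split_weight lam gl epsn I c = exp (epsn * Gain lam (left_part c I) (right_part c I) / (2 * DeltaG gl))"

definition exp_mech :: "real \<Rightarrow> real \<Rightarrow> real \<Rightarrow> ('d::finite) split set \<Rightarrow> ('d::finite) dataset \<Rightarrow> ('d::finite) split pmf" where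
  "exp_mech lam gl epsn C I = embed_pmf (\<lambda>c. if c \<in> C then
      split_weight lam gl epsn I c / (\<Sum>c'\<in>C. split_weight lam gl epsn I c') else 0)"

text \<open>Tree structure: maps a node (path from root, True = left child) to its chosen split.
  grow k I grows a complete tree of k split levels on records I.\<close>
fun grow :: "real \<Rightarrow> real \<Rightarrow> real \<Rightarrow> ('d::finite) split set \<Rightarrow> nat \<Rightarrow> ('d::finite) dataset \<Rightarrow> (bool list \<Rightarrow> ('d::finite) split) pmf" where
  "grow lam gl epsn C 0 I = return_pmf (\<lambda>_. undefined)"
| "grow lam gl epsn C (Suc k) I =
     bind_pmf (exp_mech lam gl epsn C I) (\<lambda>c.
     bind_pmf (grow lam gl epsn C k (left_part c I)) (\<lambda>l.
     bind_pmf (grow lam gl epsn C k (right_part c I)) (\<lambda>r.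
     return_pmf (\<lambda>p. case p of [] \<Rightarrow> c | b # q \<Rightarrow> (if b then l q else r q)))))"

fun node_recs :: "(bool list \<Rightarrow> ('d::finite) split) \<Rightarrow> ('d::finite) dataset \<Rightarrow> bool list \<Rightarrow> ('d::finite) dataset" where
  "node_recs s I [] = I"
| "node_recs s I (b # q) =
     node_recs (\<lambda>q'. s (b # q')) (if b then left_part (s []) I else right_part (s []) I) q"

definition leaves :: "nat \<Rightarrow> bool list set" where
  "leaves Dmax = {p. length p = Dmax}"

definition outM :: "nat \<Rightarrow> ((bool list \<Rightarrow> ('d::finite) split) \<times> (bool list \<Rightarrow> real)) measure" where
  "outM Dmax = count_space UNIV \<Otimes>\<^sub>M PiM (leaves Dmax) (\<lambda>_. borel)"

definition TrainSingleTree ::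
  "real \<Rightarrow> real \<Rightarrow> real \<Rightarrow> nat \<Rightarrow> nat \<Rightarrow> real \<Rightarrow> ('d::finite) split set \<Rightarrow> ('d::finite) dataset
     \<Rightarrow> ((bool list \<Rightarrow> ('d::finite) split) \<times> (bool list \<Rightarrow> real)) measure" where
  "TrainSingleTree lam eta gl t Dmax eps C D =
    (let el = eps / 2;
         en = eps / (2 * real Dmax);
         I0 = filter_mset (\<lambda>r. \<bar>grad r\<bar> \<le> gl) D
     in bind (measure_pmf (grow lam gl en C Dmax I0)) (\<lambda>s.
          distr (PiM (leaves Dmax) (\<lambda>p.
                   laplace (clipV eta gl t (Vleaf lam (node_recs s I0 p))) (DeltaV lam eta gl t / el)))
                (outM Dmax) (\<lambda>v. (s, v))))"

end

(*
  The tree structure is drawn by Depth_max rounds of the exponential mechanism and the leaf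
  values by the Laplace mechanism, so it suffices to bound the privacy loss of each phase.
  Discarding records with |g_i| > g_l* makes the gain change by at most Delta_G = 3 g_l*^2
  and the clipped leaf value by at most Delta_V when one record is added.  Since the records
  of a node are partitioned between its children, the extra record changes the record set of
  exactly one node per level and of exactly one leaf.  Hence every level costs a factor
  exp eps_nleaf, the whole vector of noisy leaf values costs exp eps_leaf, and the total is
  exp (Depth_max * eps_nleaf + eps_leaf) = exp eps_t.
*)
theory Submission
  imports Defs
begin

section \<open>Pointwise domination of distributions\<close>

definition pmf_le_scaled :: "real \<Rightarrow> 'a pmf \<Rightarrow> 'a pmf \<Rightarrow> bool" where
  "pmf_le_scaled a p q \<longleftrightarrow> (\<forall>x. pmf p x \<le> a * pmf q x)"

lemma pmf_le_scaled_ennreal_iff: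
  "a \<ge> 0 \<Longrightarrow> pmf_le_scaled a p q \<longleftrightarrow> (\<forall>x. ennreal (pmf p x) \<le> ennreal a * ennreal (pmf q x))"
  by (simp add: pmf_le_scaled_def ennreal_mult[symmetric] ennreal_le_iff)

lemma pmf_le_scaled_refl: "a \<ge> 1 \<Longrightarrow> pmf_le_scaled a p p"
  by (simp add: pmf_le_scaled_def mult_le_cancel_right1 pmf_nonneg)

lemma pmf_le_scaled_trans:
  assumes "pmf_le_scaled a p q" "pmf_le_scaled b q r" "a \<ge> 0"
  shows "pmf_le_scaled (a * b) p r"
  unfolding pmf_le_scaled_def
proof
  fix x
  have "pmf p x \<le> a * pmf q x" using assms(1) by (simp add: pmf_le_scaled_def)
  also have "\<dots> \<le> a * (b * pmf r x)" using assms by (intro mult_left_mono) (auto simp: pmf_le_scaled_def)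
  finally show "pmf p x \<le> a * b * pmf r x" by (simp add: mult.assoc)
qed

lemma nn_integral_pmf_le_scaled:
  assumes "pmf_le_scaled a p q" "a \<ge> 0"
  shows "(\<integral>\<^sup>+x. f x \<partial>p) \<le> ennreal a * (\<integral>\<^sup>+x. f x \<partial>q)"
proof -
  have "(\<integral>\<^sup>+x. f x \<partial>p) = (\<integral>\<^sup>+x. ennreal (pmf p x) * f x \<partial>count_space UNIV)"
    by (rule nn_integral_measure_pmf)
  also have "\<dots> \<le> (\<integral>\<^sup>+x. ennreal a * (ennreal (pmf q x) * f x) \<partial>count_space UNIV)"
    using assms by (intro nn_integral_mono)
      (simp add: pmf_le_scaled_ennreal_iff mult.assoc[symmetric] mult_right_mono)
  also have "\<dots> = ennreal a * (\<integral>\<^sup>+x. f x \<partial>q)"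
    by (simp add: nn_integral_cmult nn_integral_measure_pmf)
  finally show ?thesis .
qed

lemma pmf_le_scaled_bind_pmf1:
  assumes "pmf_le_scaled a p q" "a \<ge> 0"
  shows "pmf_le_scaled a (bind_pmf p f) (bind_pmf q f)"
  using assms nn_integral_pmf_le_scaled[OF assms]
  by (simp add: pmf_le_scaled_ennreal_iff ennreal_pmf_bind)

lemma pmf_le_scaled_bind_pmf2:
  assumes "\<And>x. pmf_le_scaled a (f x) (g x)" "a \<ge> 0"
  shows "pmf_le_scaled a (bind_pmf p f) (bind_pmf p g)"
  unfolding pmf_le_scaled_ennreal_iff[OF \<open>a \<ge> 0\<close>]
proof
  fix y
  have "ennreal (pmf (bind_pmf p f) y) = (\<integral>\<^sup>+x. pmf (f x) y \<partial>p)"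
    by (simp add: ennreal_pmf_bind)
  also have "\<dots> \<le> (\<integral>\<^sup>+x. ennreal a * pmf (g x) y \<partial>p)"
    using assms by (intro nn_integral_mono) (simp add: pmf_le_scaled_ennreal_iff)
  also have "\<dots> = ennreal a * ennreal (pmf (bind_pmf p g) y)"
    by (simp add: nn_integral_cmult ennreal_pmf_bind)
  finally show "ennreal (pmf (bind_pmf p f) y) \<le> ennreal a * ennreal (pmf (bind_pmf p g) y)" .
qed

lemma nn_integral_pmf_le_scaled_mono:
  assumes "pmf_le_scaled a p q" "a \<ge> 0" "b \<ge> 0" "\<And>x. f x \<le> ennreal b * g x"
  shows "(\<integral>\<^sup>+x. f x \<partial>p) \<le> ennreal (b * a) * (\<integral>\<^sup>+x. g x \<partial>q)"
proof -
  have "(\<integral>\<^sup>+x. f x \<partial>p) \<le> (\<integral>\<^sup>+x. ennreal b * g x \<partial>p)"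
    by (intro nn_integral_mono assms)
  also have "\<dots> = ennreal b * (\<integral>\<^sup>+x. g x \<partial>p)"
    by (simp add: nn_integral_cmult)
  also have "\<dots> \<le> ennreal b * (ennreal a * (\<integral>\<^sup>+x. g x \<partial>q))"
    by (intro mult_left_mono nn_integral_pmf_le_scaled assms) simp
  also have "\<dots> = ennreal (b * a) * (\<integral>\<^sup>+x. g x \<partial>q)"
    using assms by (simp add: ennreal_mult mult.assoc)
  finally show ?thesis .
qed

section \<open>Sensitivity of gains and leaf values\<close>

definition grads_bounded :: "real \<Rightarrow> ('d::finite) dataset \<Rightarrow> bool" where
  "grads_bounded gl I \<longleftrightarrow> (\<forall>r\<in>#I. \<bar>grad r\<bar> \<le> gl)"

text \<open>Equality is allowed because step (2) may discard the record in which two neighbours differ.\<close>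
definition adjacent :: "('d::finite) dataset \<Rightarrow> 'd dataset \<Rightarrow> bool" where
  "adjacent I J \<longleftrightarrow> I = J \<or> neighboring I J"

lemma grads_bounded_add_mset [simp]:
  "grads_bounded gl (add_mset r I) \<longleftrightarrow> \<bar>grad r\<bar> \<le> gl \<and> grads_bounded gl I"
  by (simp add: grads_bounded_def)

lemma grads_bounded_left_part [simp]: "grads_bounded gl I \<Longrightarrow> grads_bounded gl (left_part c I)"
  and grads_bounded_right_part [simp]: "grads_bounded gl I \<Longrightarrow> grads_bounded gl (right_part c I)"
  by (auto simp: grads_bounded_def left_part_def right_part_def)

lemma gsum_add_mset [simp]: "gsum (add_mset r I) = grad r + gsum I"
  by (simp add: gsum_def)

lemma abs_gsum_le: "grads_bounded gl I \<Longrightarrow> \<bar>gsum I\<bar> \<le> real (size I) * gl"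
proof (induction I)
  case empty
  then show ?case by (simp add: gsum_def)
next
  case (add r I)
  then have "\<bar>grad r + gsum I\<bar> \<le> gl + real (size I) * gl"
    by (intro order.trans[OF abs_triangle_ineq] add_mono) auto
  then show ?case by (simp add: algebra_simps)
qed

lemma adjacent_refl [simp]: "adjacent I I"
  by (simp add: adjacent_def)

lemma adjacent_filter_mset: "neighboring D D' \<Longrightarrow> adjacent (filter_mset P D) (filter_mset P D')"
  by (auto simp: adjacent_def neighboring_def)

lemma adjacent_split:
  assumes "adjacent I J"
  shows "left_part c I = left_part c J \<and> adjacent (right_part c I) (right_part c J) \<or>
         right_part c I = right_part c J \<and> adjacent (left_part c I) (left_part c J)"
  using assms unfolding adjacent_def neighboring_def left_part_def right_part_def
  by (elim disjE exE) auto

lemma adjacent_abs_diff_le: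
  fixes F :: "('d::finite) dataset \<Rightarrow> real"
  assumes step: "\<And>I r. grads_bounded gl (add_mset r I) \<Longrightarrow> \<bar>F (add_mset r I) - F I\<bar> \<le> B"
    and "adjacent I J" "grads_bounded gl I" "grads_bounded gl J" "B \<ge> 0"
  shows "\<bar>F I - F J\<bar> \<le> B"
  using assms(2-) step[where I=J] step[where I=I] unfolding adjacent_def neighboring_def
  by (auto simp: abs_minus_commute)

lemma abs_square_div_succ_diff_le:
  fixes S g gl a :: real
  assumes "a > 0" "\<bar>S\<bar> \<le> a * gl" "\<bar>g\<bar> \<le> gl"
  shows "\<bar>(S + g)^2 / (a + 1) - S^2 / a\<bar> \<le> 3 * gl^2"
proof -
  have pos: "a * (a + 1) > 0" using assms by simp
  have eq: "(S + g)^2 / (a + 1) - S^2 / a = (2*S*g*a + g^2*a - S^2) / (a * (a + 1))"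
    using assms by (simp add: field_simps power2_eq_square)
  have "\<bar>S * g\<bar> \<le> (a * gl) * gl"
    unfolding abs_mult using assms by (intro mult_mono) auto
  then have Sg: "\<bar>2*S*g*a\<bar> \<le> 2 * a^2 * gl^2"
    using assms by (simp add: abs_mult power2_eq_square)
  have g2: "g^2 * a \<le> gl^2 * a"
    using assms power_mono[of "\<bar>g\<bar>" gl 2] by (intro mult_right_mono) auto
  have S2: "S^2 \<le> a^2 * gl^2"
    using assms power_mono[of "\<bar>S\<bar>" "a * gl" 2] by (simp add: power_mult_distrib)
  have "\<bar>2*S*g*a + g^2*a - S^2\<bar> \<le> 2 * a^2 * gl^2 + gl^2 * a + a^2 * gl^2"
    using Sg g2 S2 zero_le_power2[of S] mult_nonneg_nonneg[OF zero_le_power2[of g], of a] assms(1)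
    unfolding abs_le_iff by linarith
  also have "\<dots> \<le> 3 * gl^2 * (a * (a + 1))"
    using assms by (simp add: algebra_simps power2_eq_square)
  finally show ?thesis
    unfolding eq using pos by (simp add: abs_divide pos_divide_le_eq)
qed

lemma abs_div_succ_diff_le:
  fixes S g gl lam :: real and n :: nat
  assumes "lam > 0" "\<bar>S\<bar> \<le> real n * gl" "\<bar>g\<bar> \<le> gl"
  shows "\<bar>(S + g) / (real n + lam + 1) - S / (real n + lam)\<bar> \<le> gl / (1 + lam)"
proof -
  define a where "a = real n + lam"
  have a: "a > 0" using assms by (simp add: a_def add_nonneg_pos)
  have pos: "a * (a + 1) > 0" using a by simp
  have eq: "(S + g) / (a + 1) - S / a = (a * g - S) / (a * (a + 1))"
    using a by (simp add: field_simps)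
  have "\<bar>a * g\<bar> \<le> a * gl"
    using assms a by (simp add: abs_mult mult_left_mono)
  then have "\<bar>a * g - S\<bar> \<le> (2 * real n + lam) * gl"
    using assms(2) unfolding abs_le_iff a_def by (simp add: algebra_simps)
  then have num: "\<bar>a * g - S\<bar> * (1 + lam) \<le> (2 * real n + lam) * (1 + lam) * gl"
    using assms by (simp add: mult_right_mono mult.assoc mult.commute[of gl])
  \<comment> \<open>\<open>(2n + \<lambda>)(1 + \<lambda>) \<le> (n + \<lambda>)(n + \<lambda> + 1)\<close> amounts to \<open>n \<le> n\<^sup>2\<close>,
    true for natural \<open>n\<close>\<close>
  have "real n \<le> real n * real n"
    by (metis of_nat_le_iff of_nat_mult le_square)
  then have "(2 * real n + lam) * (1 + lam) * gl \<le> a * (a + 1) * gl"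
    using assms by (intro mult_right_mono) (auto simp: a_def algebra_simps)
  with num have "\<bar>a * g - S\<bar> * (1 + lam) \<le> gl * (a * (a + 1))"
    by (simp add: mult.commute)
  then show ?thesis
    using pos assms unfolding a_def[symmetric] eq
    by (simp add: abs_divide divide_simps mult.commute)
qed

definition gain_term :: "real \<Rightarrow> ('d::finite) dataset \<Rightarrow> real" where
  "gain_term lam I = (gsum I)^2 / (real (size I) + lam)"

lemma Gain_eq_gain_term: "Gain lam IL IR = gain_term lam IL + gain_term lam IR"
  by (simp add: Gain_def gain_term_def)

lemma abs_gain_term_add_mset_le:
  assumes "lam > 0" "grads_bounded gl (add_mset r I)"
  shows "\<bar>gain_term lam (add_mset r I) - gain_term lam I\<bar> \<le> 3 * gl^2"
proof -
  have a: "real (size I) + lam > 0" using assms by (simp add: add_nonneg_pos)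
  have "\<bar>gsum I\<bar> \<le> real (size I) * gl" using assms by (simp add: abs_gsum_le)
  also have "\<dots> \<le> (real (size I) + lam) * gl"
    using assms by (intro mult_right_mono) auto
  finally have "\<bar>gsum I\<bar> \<le> (real (size I) + lam) * gl" .
  from abs_square_div_succ_diff_le[OF a this, of "grad r"] assms show ?thesis
    by (simp add: gain_term_def add.commute add.left_commute)
qed

lemma abs_Gain_split_diff_le:
  assumes "lam > 0" "adjacent I J" "grads_bounded gl I" "grads_bounded gl J"
  shows "\<bar>Gain lam (left_part c I) (right_part c I) - Gain lam (left_part c J) (right_part c J)\<bar>
           \<le> DeltaG gl"
proof -
  have "\<bar>gain_term lam X - gain_term lam Y\<bar> \<le> 3 * gl^2"
    if "adjacent X Y" "grads_bounded gl X" "grads_bounded gl Y" for X Y :: "'a dataset"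
    using adjacent_abs_diff_le[where F = "gain_term lam", OF abs_gain_term_add_mset_le[OF \<open>lam > 0\<close>] that]
    by simp
  with adjacent_split[OF assms(2), of c] assms(3,4) show ?thesis
    unfolding Gain_eq_gain_term DeltaG_def by auto
qed

lemma abs_Vleaf_add_mset_le:
  assumes "lam > 0" "grads_bounded gl (add_mset r I)"
  shows "\<bar>Vleaf lam (add_mset r I) - Vleaf lam I\<bar> \<le> gl / (1 + lam)"
proof -
  have "\<bar>gsum I\<bar> \<le> real (size I) * gl" using assms by (simp add: abs_gsum_le)
  then have "\<bar>(gsum I + grad r) / (real (size I) + lam + 1) - gsum I / (real (size I) + lam)\<bar>
               \<le> gl / (1 + lam)"
    using assms by (intro abs_div_succ_diff_le) auto
  moreover have "Vleaf lam (add_mset r I) - Vleaf lam I =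
      - ((gsum I + grad r) / (real (size I) + lam + 1) - gsum I / (real (size I) + lam))"
    by (simp add: Vleaf_def add_ac diff_divide_distrib add_divide_distrib)
  ultimately show ?thesis by simp
qed

lemma clipV_eq_clamp:
  assumes "gl * (1 - eta)^(t - 1) > 0"
  shows "clipV eta gl t V = max (- (gl * (1 - eta)^(t - 1))) (min (gl * (1 - eta)^(t - 1)) V)"
  using assms by (auto simp: clipV_def min_def max_def field_simps abs_if)

lemma DeltaV_pos: "lam > 0 \<Longrightarrow> eta < 1 \<Longrightarrow> gl > 0 \<Longrightarrow> DeltaV lam eta gl t > 0"
  by (simp add: DeltaV_def)

lemma abs_clipV_Vleaf_diff_le:
  assumes "lam > 0" "eta < 1" "gl > 0" "adjacent I J" "grads_bounded gl I" "grads_bounded gl J"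
  shows "\<bar>clipV eta gl t (Vleaf lam I) - clipV eta gl t (Vleaf lam J)\<bar> \<le> DeltaV lam eta gl t"
proof -
  define B where "B = gl * (1 - eta)^(t - 1)"
  have "B > 0" using assms by (simp add: B_def)
  have clamp: "\<bar>max (-B) (min B x) - max (-B) (min B y)\<bar> \<le> min \<bar>x - y\<bar> (2 * B)" for x y
    using \<open>B > 0\<close> by (smt (verit))
  have "\<bar>clipV eta gl t (Vleaf lam I) - clipV eta gl t (Vleaf lam J)\<bar>
          \<le> min \<bar>Vleaf lam I - Vleaf lam J\<bar> (2 * B)"
    unfolding clipV_eq_clamp[OF \<open>B > 0\<close>[unfolded B_def]] B_def[symmetric] by (rule clamp)
  also have "\<dots> \<le> min (gl / (1 + lam)) (2 * B)"
    using adjacent_abs_diff_le[where F = "Vleaf lam", OF abs_Vleaf_add_mset_le[OF \<open>lam > 0\<close>] assms(4-6)]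
      assms by (intro min.mono) auto
  also have "\<dots> = DeltaV lam eta gl t"
    by (simp add: DeltaV_def B_def mult.assoc)
  finally show ?thesis .
qed

section \<open>Exponential mechanism and tree growing\<close>

lemma pmf_embed_pmf_normalized:
  fixes w :: "'a \<Rightarrow> real"
  assumes "finite C" "C \<noteq> {}" "\<And>c. c \<in> C \<Longrightarrow> w c > 0"
  shows "pmf (embed_pmf (\<lambda>c. if c \<in> C then w c / sum w C else 0)) c =
           (if c \<in> C then w c / sum w C else 0)"
proof (rule pmf_embed_pmf)
  have W: "sum w C > 0" using assms by (intro sum_pos) auto
  then show "\<And>c. 0 \<le> (if c \<in> C then w c / sum w C else 0)"
    using assms by (simp add: less_imp_le)
  have "(\<integral>\<^sup>+c. ennreal (if c \<in> C then w c / sum w C else 0) \<partial>count_space UNIV)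
          = (\<Sum>c\<in>C. ennreal (w c / sum w C))"
    using assms by (subst nn_integral_count_space'[where A = C]) auto
  also have "\<dots> = ennreal (\<Sum>c\<in>C. w c / sum w C)"
    using assms W by (intro sum_ennreal) (simp add: less_imp_le)
  also have "(\<Sum>c\<in>C. w c / sum w C) = 1"
    using W by (simp add: sum_divide_distrib[symmetric])
  finally show "(\<integral>\<^sup>+c. ennreal (if c \<in> C then w c / sum w C else 0) \<partial>count_space UNIV) = 1"
    by simp
qed

lemma normalized_weight_le:
  fixes w v :: "'a \<Rightarrow> real"
  assumes "finite C" "c \<in> C" "\<And>x. x \<in> C \<Longrightarrow> 0 < w x" "\<And>x. x \<in> C \<Longrightarrow> 0 < v x"
    and "\<And>x. x \<in> C \<Longrightarrow> w x \<le> k * v x" "\<And>x. x \<in> C \<Longrightarrow> v x \<le> k * w x"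
  shows "w c / sum w C \<le> k^2 * (v c / sum v C)"
proof -
  have W: "sum w C > 0" and V: "sum v C > 0"
    using assms by (auto intro!: sum_pos)
  have "0 < k * v c" using assms(3,5)[OF assms(2)] by linarith
  have "sum v C \<le> k * sum w C"
    using assms by (simp add: sum_distrib_left sum_mono)
  then have "w c * sum v C \<le> (k * v c) * (k * sum w C)"
    using assms(5)[OF assms(2)] V \<open>0 < k * v c\<close> by (intro mult_mono) auto
  then show ?thesis
    using V W by (simp add: field_simps power2_eq_square)
qed

lemma pmf_exp_mech:
  assumes "finite C" "C \<noteq> {}"
  shows "pmf (exp_mech lam gl en C I) c =
    (if c \<in> C then split_weight lam gl en I c / (\<Sum>c'\<in>C. split_weight lam gl en I c') else 0)"
  unfolding exp_mech_def using assms
  by (intro pmf_embed_pmf_normalized) (auto simp: split_weight_def)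

lemma split_weight_le:
  assumes "en \<ge> 0" "gl > 0"
    and "\<bar>Gain lam (left_part c I) (right_part c I) - Gain lam (left_part c J) (right_part c J)\<bar>
           \<le> DeltaG gl"
  shows "split_weight lam gl en I c \<le> exp (en / 2) * split_weight lam gl en J c"
proof -
  let ?GI = "Gain lam (left_part c I) (right_part c I)"
  let ?GJ = "Gain lam (left_part c J) (right_part c J)"
  have "DeltaG gl > 0" using assms by (simp add: DeltaG_def)
  have "en * (?GI - ?GJ) \<le> en * DeltaG gl"
    using assms by (intro mult_left_mono) auto
  then have "en * ?GI / (2 * DeltaG gl) \<le> en / 2 + en * ?GJ / (2 * DeltaG gl)"
    using \<open>DeltaG gl > 0\<close> by (simp add: field_simps)
  then show ?thesis
    by (simp add: split_weight_def exp_add[symmetric])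
qed

lemma split_weight_pos: "split_weight lam gl en I c > 0"
  by (simp add: split_weight_def)

lemma exp_mech_pmf_le_scaled:
  assumes "finite C" "C \<noteq> {}" "en \<ge> 0" "gl > 0"
    and "\<And>c. \<bar>Gain lam (left_part c I) (right_part c I) - Gain lam (left_part c J) (right_part c J)\<bar>
               \<le> DeltaG gl"
  shows "pmf_le_scaled (exp en) (exp_mech lam gl en C I) (exp_mech lam gl en C J)"
  unfolding pmf_le_scaled_def
proof
  fix c
  have IJ: "split_weight lam gl en I c' \<le> exp (en / 2) * split_weight lam gl en J c'"
    and JI: "split_weight lam gl en J c' \<le> exp (en / 2) * split_weight lam gl en I c'" for c'
    using assms(5)[of c'] by (auto intro!: split_weight_le assms(3,4) simp: abs_minus_commute)
  have "exp en = (exp (en / 2))^2"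
    by (simp add: exp_double[symmetric])
  then show "pmf (exp_mech lam gl en C I) c \<le> exp en * pmf (exp_mech lam gl en C J) c"
    using normalized_weight_le[where w = "split_weight lam gl en I" and v = "split_weight lam gl en J",
        OF assms(1) _ split_weight_pos split_weight_pos IJ JI]
    by (simp add: pmf_exp_mech[OF assms(1,2)])
qed

lemma grow_pmf_le_scaled:
  assumes "lam > 0" "gl > 0" "en \<ge> 0" "finite C" "C \<noteq> {}"
    and "adjacent I J" "grads_bounded gl I" "grads_bounded gl J"
  shows "pmf_le_scaled (exp (real k * en)) (grow lam gl en C k I) (grow lam gl en C k J)"
  using assms(6-)
proof (induction k arbitrary: I J)
  case 0
  then show ?case by (simp add: pmf_le_scaled_refl)
next
  case (Suc k)
  define children where "children X = (\<lambda>c. bind_pmf (grow lam gl en C k (left_part c X)) (\<lambda>l.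
     bind_pmf (grow lam gl en C k (right_part c X)) (\<lambda>r.
     return_pmf (\<lambda>p. case p of [] \<Rightarrow> c | b # q \<Rightarrow> (if b then l q else r q)))))" for X
  have grow_Suc: "grow lam gl en C (Suc k) X = bind_pmf (exp_mech lam gl en C X) (children X)" for X
    by (simp add: children_def)
  have root: "pmf_le_scaled (exp en)
      (bind_pmf (exp_mech lam gl en C I) (children I)) (bind_pmf (exp_mech lam gl en C J) (children I))"
    using assms Suc.prems
    by (intro pmf_le_scaled_bind_pmf1 exp_mech_pmf_le_scaled abs_Gain_split_diff_le) auto
  \<comment> \<open>only one child of the root receives different records\<close>
  have "pmf_le_scaled (exp (real k * en)) (children I c) (children J c)" for c
    using adjacent_split[OF Suc.prems(1), of c]
  proof
    assume split: "left_part c I = left_part c J \<and> adjacent (right_part c I) (right_part c J)"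
    then show ?thesis
      unfolding children_def split[THEN conjunct1] using Suc.prems
      by (intro pmf_le_scaled_bind_pmf2 pmf_le_scaled_bind_pmf1 Suc.IH) auto
  next
    assume split: "right_part c I = right_part c J \<and> adjacent (left_part c I) (left_part c J)"
    then show ?thesis
      unfolding children_def split[THEN conjunct1] using Suc.prems
      by (intro pmf_le_scaled_bind_pmf1 Suc.IH) auto
  qed
  then have "pmf_le_scaled (exp (real k * en))
      (bind_pmf (exp_mech lam gl en C J) (children I)) (bind_pmf (exp_mech lam gl en C J) (children J))"
    by (intro pmf_le_scaled_bind_pmf2) auto
  from pmf_le_scaled_trans[OF root this] show ?case
    unfolding grow_Suc by (simp add: exp_add[symmetric] algebra_simps)
qed

lemma leaves_Suc: "leaves (Suc n) = Cons True ` leaves n \<union> Cons False ` leaves n"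
  by (auto simp: leaves_def length_Suc_conv)

lemma finite_leaves: "finite (leaves n)"
  using finite_lists_length_eq[of "UNIV :: bool set" n] by (simp add: leaves_def)

lemma sum_leaves_node_recs_le:
  fixes F :: "('d::finite) dataset \<Rightarrow> 'd dataset \<Rightarrow> real"
  assumes "\<And>X. F X X = 0"
    and "\<And>X Y. adjacent X Y \<Longrightarrow> grads_bounded gl X \<Longrightarrow> grads_bounded gl Y \<Longrightarrow> F X Y \<le> B"
    and "adjacent I J" "grads_bounded gl I" "grads_bounded gl J"
  shows "(\<Sum>p\<in>leaves n. F (node_recs s I p) (node_recs s J p)) \<le> B"
  using assms(3-)
proof (induction n arbitrary: s I J)
  case 0
  have "leaves 0 = {[]}" by (auto simp: leaves_def)
  with 0 assms(2) show ?case by simp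
next
  case (Suc n)
  let ?sL = "\<lambda>q. s (True # q)" and ?sR = "\<lambda>q. s (False # q)"
  have "(\<Sum>p\<in>leaves (Suc n). F (node_recs s I p) (node_recs s J p)) =
        (\<Sum>q\<in>leaves n. F (node_recs ?sL (left_part (s []) I) q) (node_recs ?sL (left_part (s []) J) q)) +
        (\<Sum>q\<in>leaves n. F (node_recs ?sR (right_part (s []) I) q) (node_recs ?sR (right_part (s []) J) q))"
    unfolding leaves_Suc by (subst sum.union_disjoint) (auto simp: finite_leaves sum.reindex)
  \<comment> \<open>the records differ in one subtree only, so the other sum vanishes\<close>
  also have "\<dots> \<le> B"
    using adjacent_split[OF Suc.prems(1), of "s []"]
  proof
    assume "left_part (s []) I = left_part (s []) J \<and> adjacent (right_part (s []) I) (right_part (s []) J)"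
    with Suc.prems Suc.IH[where s = ?sR] show ?thesis by (simp add: assms(1))
  next
    assume "right_part (s []) I = right_part (s []) J \<and> adjacent (left_part (s []) I) (left_part (s []) J)"
    with Suc.prems Suc.IH[where s = ?sL] show ?thesis by (simp add: assms(1))
  qed
  finally show ?case .
qed

section \<open>Laplace mechanism on the leaves\<close>

definition laplace_density :: "real \<Rightarrow> real \<Rightarrow> real \<Rightarrow> real" where
  "laplace_density mu b x = exp (- \<bar>x - mu\<bar> / b) / (2 * b)"

lemma laplace_eq_density: "laplace mu b = density lborel (\<lambda>x. ennreal (laplace_density mu b x))"
  by (simp add: laplace_def laplace_density_def)

lemma borel_measurable_laplace_density [measurable]: "laplace_density mu b \<in> borel_measurable borel"
  unfolding laplace_density_def by measurable

lemma laplace_density_nonneg: "b > 0 \<Longrightarrow> laplace_density mu b x \<ge> 0"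
  by (simp add: laplace_density_def)

lemma laplace_density_le:
  assumes "b > 0"
  shows "laplace_density m b x \<le> exp (\<bar>m - m'\<bar> / b) * laplace_density m' b x"
proof -
  have "- \<bar>x - m\<bar> / b \<le> \<bar>m - m'\<bar> / b + - \<bar>x - m'\<bar> / b"
    using assms by (simp add: field_simps)
  then show ?thesis
    using assms by (simp add: laplace_density_def exp_add[symmetric] divide_right_mono)
qed

lemma nn_integral_exp_neg_abs: "(\<integral>\<^sup>+x. ennreal (exp (- \<bar>x\<bar>)) \<partial>lborel) = 2"
proof -
  define ed where "ed = exponential_density 1"
  have [measurable]: "ed \<in> borel_measurable borel"
    by (simp add: ed_def)
  have ed: "(\<integral>\<^sup>+x. ennreal (ed x) \<partial>lborel) = 1"
    using prob_space.emeasure_space_1[OF prob_space_exponential_density[of 1]]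
    by (simp add: ed_def emeasure_density)
  then have ed_reflected: "(\<integral>\<^sup>+x. ennreal (ed (- x)) \<partial>lborel) = 1"
    using nn_integral_real_affine[of "\<lambda>x. ennreal (ed x)" "-1" 0] by simp
  have "(\<integral>\<^sup>+x. ennreal (exp (- \<bar>x\<bar>)) \<partial>lborel) = (\<integral>\<^sup>+x. ennreal (ed x) + ennreal (ed (- x)) \<partial>lborel)"
  proof (intro nn_integral_cong_AE eventually_mono[OF AE_lborel_singleton[of 0]])
    fix x :: real
    assume "x \<noteq> 0"
    then show "ennreal (exp (- \<bar>x\<bar>)) = ennreal (ed x) + ennreal (ed (- x))"
      by (cases "x < 0") (auto simp: ed_def exponential_density_def)
  qed
  also have "\<dots> = 2"
    using ed ed_reflected by (subst nn_integral_add) auto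
  finally show ?thesis .
qed

lemma prob_space_laplace:
  assumes "b > 0"
  shows "prob_space (laplace mu b)"
proof
  have "emeasure (laplace mu b) (space (laplace mu b)) = (\<integral>\<^sup>+x. ennreal (laplace_density mu b x) \<partial>lborel)"
    by (simp add: laplace_eq_density emeasure_density)
  also have "\<dots> = ennreal \<bar>b\<bar> * (\<integral>\<^sup>+x. ennreal (laplace_density mu b (mu + b * x)) \<partial>lborel)"
    using assms by (intro nn_integral_real_affine) auto
  also have "\<dots> = ennreal b * (\<integral>\<^sup>+x. ennreal (1 / (2 * b)) * ennreal (exp (- \<bar>x\<bar>)) \<partial>lborel)"
    using assms by (simp add: laplace_density_def abs_mult ennreal_mult[symmetric])
  also have "\<dots> = ennreal b * (ennreal (1 / (2 * b)) * 2)"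
    by (subst nn_integral_cmult) (auto simp: nn_integral_exp_neg_abs)
  also have "\<dots> = 1"
    using assms by (simp add: ennreal_mult[symmetric] mult.assoc[symmetric] ennreal_numeral[symmetric]
        del: ennreal_numeral)
  finally show "emeasure (laplace mu b) (space (laplace mu b)) = 1" .
qed

lemma sets_laplace [simp]: "sets (laplace mu b) = sets borel"
  by (simp add: laplace_def)

lemma PiM_density_lborel:
  fixes g :: "'i \<Rightarrow> real \<Rightarrow> real"
  assumes "finite L" and [measurable]: "\<And>p. g p \<in> borel_measurable borel"
  shows "PiM L (\<lambda>p. density lborel (\<lambda>x. ennreal (g p x))) =
         density (PiM L (\<lambda>_. lborel)) (\<lambda>x. \<Prod>p\<in>L. ennreal (g p (x p)))"
proof -
  have "product_sigma_finite (\<lambda>p. density lborel (\<lambda>x. ennreal (g p x)))"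
    unfolding product_sigma_finite_def
    by (subst sigma_finite_measure.sigma_finite_iff_density_finite[OF sigma_finite_lborel]) auto
  then show ?thesis
  proof (rule product_sigma_finite.PiM_eqI[OF _ \<open>finite L\<close>, symmetric])
    show "sets (density (PiM L (\<lambda>_. lborel)) (\<lambda>x. \<Prod>p\<in>L. ennreal (g p (x p)))) =
          sets (PiM L (\<lambda>p. density lborel (\<lambda>x. ennreal (g p x))))"
      by (simp cong: sets_PiM_cong)
  next
    fix A
    assume "\<And>i. i \<in> L \<Longrightarrow> A i \<in> sets (density lborel (\<lambda>x. ennreal (g i x)))"
    then have A: "\<And>i. i \<in> L \<Longrightarrow> A i \<in> sets borel" by simp
    have "Pi\<^sub>E L A \<in> sets (PiM L (\<lambda>_. lborel :: real measure))"
      using A \<open>finite L\<close> by (intro sets_PiM_I_finite) auto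
    then have "emeasure (density (PiM L (\<lambda>_. lborel)) (\<lambda>x. \<Prod>p\<in>L. ennreal (g p (x p)))) (Pi\<^sub>E L A) =
        (\<integral>\<^sup>+x. (\<Prod>p\<in>L. ennreal (g p (x p))) * indicator (Pi\<^sub>E L A) x \<partial>PiM L (\<lambda>_. lborel))"
      by (simp add: emeasure_density)
    also have "\<dots> = (\<integral>\<^sup>+x. (\<Prod>p\<in>L. ennreal (g p (x p)) * indicator (A p) (x p)) \<partial>PiM L (\<lambda>_. lborel))"
    proof (intro nn_integral_cong)
      fix x
      assume "x \<in> space (PiM L (\<lambda>_. lborel :: real measure))"
      then have "indicator (Pi\<^sub>E L A) x = (\<Prod>p\<in>L. indicator (A p) (x p) :: ennreal)"
        using \<open>finite L\<close>
        by (auto simp: space_PiM indicator_def PiE_def prod_zero_iff Pi_def intro!: prod.neutral)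
      then show "(\<Prod>p\<in>L. ennreal (g p (x p))) * indicator (Pi\<^sub>E L A) x =
            (\<Prod>p\<in>L. ennreal (g p (x p)) * indicator (A p) (x p))"
        by (simp add: prod.distrib)
    qed
    also have "\<dots> = (\<Prod>p\<in>L. \<integral>\<^sup>+y. ennreal (g p y) * indicator (A p) y \<partial>lborel)"
      using A \<open>finite L\<close>
      by (intro product_sigma_finite.product_nn_integral_prod)
        (auto simp: product_sigma_finite_def sigma_finite_lborel)
    also have "\<dots> = (\<Prod>p\<in>L. emeasure (density lborel (\<lambda>x. ennreal (g p x))) (A p))"
      using A by (intro prod.cong) (auto simp: emeasure_density)
    finally show "emeasure (density (PiM L (\<lambda>_. lborel)) (\<lambda>x. \<Prod>p\<in>L. ennreal (g p (x p)))) (Pi\<^sub>E L A) =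
        (\<Prod>p\<in>L. emeasure (density lborel (\<lambda>x. ennreal (g p x))) (A p))" .
  qed
qed

lemma emeasure_PiM_laplace_le:
  fixes m m' :: "'i \<Rightarrow> real"
  assumes "finite L" "b > 0" "(\<Sum>p\<in>L. \<bar>m p - m' p\<bar>) \<le> e * b"
    and A: "A \<in> sets (PiM L (\<lambda>_. borel :: real measure))"
  shows "emeasure (PiM L (\<lambda>p. laplace (m p) b)) A
           \<le> ennreal (exp e) * emeasure (PiM L (\<lambda>p. laplace (m' p) b)) A"
proof -
  define f where "f \<mu> x = (\<Prod>p\<in>L. laplace_density (\<mu> p) b (x p))" for \<mu> x
  have f_nonneg: "0 \<le> f \<mu> x" for \<mu> x
    unfolding f_def using \<open>b > 0\<close> by (intro prod_nonneg) (simp add: laplace_density_nonneg)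
  have emeasure_eq: "emeasure (PiM L (\<lambda>p. laplace (\<mu> p) b)) A =
      (\<integral>\<^sup>+x. ennreal (f \<mu> x) * indicator A x \<partial>PiM L (\<lambda>_. lborel))" for \<mu>
    using A \<open>finite L\<close> \<open>b > 0\<close>
    by (simp add: laplace_eq_density PiM_density_lborel emeasure_density f_def prod_ennreal
        laplace_density_nonneg cong: sets_PiM_cong)
  have "f m x \<le> (\<Prod>p\<in>L. exp (\<bar>m p - m' p\<bar> / b) * laplace_density (m' p) b (x p))" for x
    unfolding f_def using \<open>b > 0\<close>
    by (intro prod_mono) (auto simp: laplace_density_nonneg laplace_density_le)
  also have "\<dots> x = exp ((\<Sum>p\<in>L. \<bar>m p - m' p\<bar>) / b) * f m' x" for x
    using \<open>finite L\<close> by (simp add: f_def prod.distrib exp_sum sum_divide_distrib)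
  also have "\<dots> x \<le> exp e * f m' x" for x
    using assms(2,3) f_nonneg by (intro mult_right_mono) (simp_all add: pos_divide_le_eq)
  finally have "ennreal (f m x) * indicator A x \<le> ennreal (exp e) * (ennreal (f m' x) * indicator A x)" for x
    using f_nonneg by (simp add: ennreal_mult[symmetric] mult.assoc[symmetric] ennreal_leI mult_right_mono)
  then have "emeasure (PiM L (\<lambda>p. laplace (m p) b)) A
      \<le> (\<integral>\<^sup>+x. ennreal (exp e) * (ennreal (f m' x) * indicator A x) \<partial>PiM L (\<lambda>_. lborel))"
    unfolding emeasure_eq by (rule nn_integral_mono)
  also have "\<dots> = ennreal (exp e) * emeasure (PiM L (\<lambda>p. laplace (m' p) b)) A"
    unfolding emeasure_eq using A by (intro nn_integral_cmult) (simp add: f_def cong: sets_PiM_cong)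
  finally show ?thesis .
qed

definition noisy_leaves ::
  "real \<Rightarrow> real \<Rightarrow> real \<Rightarrow> nat \<Rightarrow> nat \<Rightarrow> real \<Rightarrow> ('d::finite) dataset \<Rightarrow> (bool list \<Rightarrow> 'd split)
     \<Rightarrow> (bool list \<Rightarrow> real) measure" where
  "noisy_leaves lam eta gl t Dmax eps I s =
     PiM (leaves Dmax) (\<lambda>p.
       laplace (clipV eta gl t (Vleaf lam (node_recs s I p))) (DeltaV lam eta gl t / (eps / 2)))"

lemma sets_noisy_leaves:
  "sets (noisy_leaves lam eta gl t Dmax eps I s) = sets (PiM (leaves Dmax) (\<lambda>_. borel))"
  unfolding noisy_leaves_def by (rule sets_PiM_cong) simp_all

lemma emeasure_TrainSingleTree:
  fixes D :: "('d::finite) dataset"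
  assumes "lam > 0" "eta < 1" "gl > 0" "eps > 0" "Out \<in> sets (outM Dmax)"
  defines "I \<equiv> filter_mset (\<lambda>r. \<bar>grad r\<bar> \<le> gl) D"
  shows "emeasure (TrainSingleTree lam eta gl t Dmax eps C D) Out =
    (\<integral>\<^sup>+s. emeasure (noisy_leaves lam eta gl t Dmax eps I s) (Pair s -` Out)
       \<partial>grow lam gl (eps / (2 * real Dmax)) C Dmax I)"
proof -
  let ?N = "noisy_leaves lam eta gl t Dmax eps I" and ?T = "grow lam gl (eps / (2 * real Dmax)) C Dmax I"
  have "prob_space (?N s)" for s
    unfolding noisy_leaves_def using assms
    by (intro prob_space_PiM prob_space_laplace) (simp add: DeltaV_pos)
  moreover have Pair_measurable: "Pair s \<in> ?N s \<rightarrow>\<^sub>M outM Dmax" for s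
    unfolding outM_def by (simp add: measurable_cong_sets[OF sets_noisy_leaves refl])
  ultimately have "(\<lambda>s. distr (?N s) (outM Dmax) (Pair s)) \<in> ?T \<rightarrow>\<^sub>M subprob_algebra (outM Dmax)"
    by (simp add: space_subprob_algebra prob_space.prob_space_distr prob_space_imp_subprob_space)
  then have "emeasure (TrainSingleTree lam eta gl t Dmax eps C D) Out =
      (\<integral>\<^sup>+s. emeasure (distr (?N s) (outM Dmax) (Pair s)) Out \<partial>?T)"
    using assms by (simp add: TrainSingleTree_def noisy_leaves_def emeasure_bind Let_def)
  also have "\<dots> = (\<integral>\<^sup>+s. emeasure (?N s) (Pair s -` Out) \<partial>?T)"
  proof (intro nn_integral_cong)
    fix s
    have "Pair s -` Out \<in> sets (?N s)"
      using sets_Pair1[OF assms(5)[unfolded outM_def]] by (simp add: sets_noisy_leaves)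
    then show "emeasure (distr (?N s) (outM Dmax) (Pair s)) Out = emeasure (?N s) (Pair s -` Out)"
      by (simp add: emeasure_distr[OF Pair_measurable assms(5)] sets.Int_space_eq2)
  qed
  finally show ?thesis .
qed

lemma emeasure_noisy_leaves_le:
  assumes "lam > 0" "eta < 1" "gl > 0" "eps > 0"
    and "adjacent I J" "grads_bounded gl I" "grads_bounded gl J"
    and "A \<in> sets (PiM (leaves Dmax) (\<lambda>_. borel))"
  shows "emeasure (noisy_leaves lam eta gl t Dmax eps I s) A
           \<le> ennreal (exp (eps / 2)) * emeasure (noisy_leaves lam eta gl t Dmax eps J s) A"
  unfolding noisy_leaves_def
proof (rule emeasure_PiM_laplace_le[OF finite_leaves _ _ assms(8)])
  let ?v = "\<lambda>X. clipV eta gl t (Vleaf lam X)"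
  show "DeltaV lam eta gl t / (eps / 2) > 0"
    using assms by (simp add: DeltaV_pos)
  have "(\<Sum>p\<in>leaves Dmax. \<bar>?v (node_recs s I p) - ?v (node_recs s J p)\<bar>) \<le> DeltaV lam eta gl t"
    using assms abs_clipV_Vleaf_diff_le
    by (intro sum_leaves_node_recs_le[where F = "\<lambda>X Y. \<bar>?v X - ?v Y\<bar>"]) auto
  then show "(\<Sum>p\<in>leaves Dmax. \<bar>?v (node_recs s I p) - ?v (node_recs s J p)\<bar>)
      \<le> eps / 2 * (DeltaV lam eta gl t / (eps / 2))"
    using assms by simp
qed

theorem theorem7:
  fixes lam eta gl eps :: real and t Dmax :: nat
    and C :: "'d::finite split set"
    and D D' :: "'d dataset" and Out :: "((bool list \<Rightarrow> 'd split) \<times> (bool list \<Rightarrow> real)) set"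
  assumes "lam > 0" and "0 < eta" and "eta < 1" and "gl > 0" and "t \<ge> 1" and "Dmax \<ge> 1"
    and "eps > 0"
    and "finite C" and "C \<noteq> {}"
    and "\<forall>r \<in># D + D'. lab r \<in> {-1..1}"
    and "neighboring D D'"
    and "Out \<in> sets (outM Dmax)"
  shows "emeasure (TrainSingleTree lam eta gl t Dmax eps C D) Out
           \<le> ennreal (exp eps) * emeasure (TrainSingleTree lam eta gl t Dmax eps C D') Out"
proof -
  let ?I = "filter_mset (\<lambda>r. \<bar>grad r\<bar> \<le> gl) D" and ?J = "filter_mset (\<lambda>r. \<bar>grad r\<bar> \<le> gl) D'"
  let ?en = "eps / (2 * real Dmax)"
  have adj: "adjacent ?I ?J" and bnd: "grads_bounded gl ?I" "grads_bounded gl ?J"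
    using \<open>neighboring D D'\<close> by (simp_all add: adjacent_filter_mset grads_bounded_def)
  have tree: "pmf_le_scaled (exp (real Dmax * ?en))
      (grow lam gl ?en C Dmax ?I) (grow lam gl ?en C Dmax ?J)"
    using assms adj bnd by (intro grow_pmf_le_scaled) auto
  have leaves: "emeasure (noisy_leaves lam eta gl t Dmax eps ?I s) (Pair s -` Out)
      \<le> ennreal (exp (eps / 2)) * emeasure (noisy_leaves lam eta gl t Dmax eps ?J s) (Pair s -` Out)"
    for s
    using assms adj bnd sets_Pair1[of Out, unfolded outM_def[symmetric]]
    by (intro emeasure_noisy_leaves_le) (auto simp: outM_def)
  have "exp (eps / 2) * exp (real Dmax * ?en) = exp eps"
    using \<open>Dmax \<ge> 1\<close> by (simp add: exp_add[symmetric])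
  then show ?thesis
    using nn_integral_pmf_le_scaled_mono[OF tree _ _ leaves] assms
    by (simp add: emeasure_TrainSingleTree)
qed

end
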